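(* Let $(R,\mathfrak{m})$ be a local ring with residue field $k$, let $S=\mathrm{Spec}\,R$, let $A$ be a finite abelian group and let $H\hookrightarrow D_S(A)$ be a closed subgroup scheme, with $R[H]=R[A]/I$ for a Hopf ideal $I$. If the order of $A$ is invertible in $R$, then the quotient map $R[H]\to R[H]\otimes_R k$ induces a bijection on group-like elements.
   Context: $D_S(A)=\mathrm{Spec}\,R[A]$. An element $g$ of a Hopf algebra is group-like if $\Delta(g)=g\otimes g$ and $\varepsilon(g)=1$. $H$ need not be flat over $R$. *)

theory Defs
  imports Main
begin

text \<open>Group algebra R[A] of a finite abelian group A (type 'a, written additively)
over a commutative ring R (type 'r): elements are functions 'a \<Rightarrow> 'r
(coefficient of each group element). R[A]\<otimes>R[A] = R[A\<times>A] is represented by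
functions 'a \<times> 'a \<Rightarrow> 'r.\<close>

definition conv :: "('a::ab_group_add \<Rightarrow> 'r::comm_ring_1) \<Rightarrow> ('a \<Rightarrow> 'r) \<Rightarrow> ('a \<Rightarrow> 'r)" where
  "conv f g = (\<lambda>c. \<Sum>a\<in>UNIV. f a * g (c - a))"

definition gtensor :: "('a \<Rightarrow> 'r::comm_ring_1) \<Rightarrow> ('a \<Rightarrow> 'r) \<Rightarrow> ('a \<times> 'a \<Rightarrow> 'r)" where
  "gtensor x y = (\<lambda>(a, b). x a * y b)"

definition comult :: "('a \<Rightarrow> 'r::comm_ring_1) \<Rightarrow> ('a \<times> 'a \<Rightarrow> 'r)" where
  "comult f = (\<lambda>(a, b). if a = b then f a else 0)"

definition counit :: "('a \<Rightarrow> 'r::comm_ring_1) \<Rightarrow> 'r" where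
  "counit f = (\<Sum>a\<in>UNIV. f a)"

definition antipode :: "('a::ab_group_add \<Rightarrow> 'r::comm_ring_1) \<Rightarrow> ('a \<Rightarrow> 'r)" where
  "antipode f = (\<lambda>a. f (- a))"

text \<open>Image of I\<otimes>R[A] + R[A]\<otimes>I in R[A]\<otimes>R[A]: the additive closure of
elementary tensors with one factor in I.  R[A\<times>A] modulo it is R[H]\<otimes>R[H].\<close>
inductive_set tensor_ideal :: "('a \<Rightarrow> 'r::comm_ring_1) set \<Rightarrow> ('a \<times> 'a \<Rightarrow> 'r) set"
  for I where
  zero: "(\<lambda>_. 0) \<in> tensor_ideal I"
| left: "x \<in> I \<Longrightarrow> t \<in> tensor_ideal I \<Longrightarrow> (\<lambda>p. gtensor x y p + t p) \<in> tensor_ideal I"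
| right: "y \<in> I \<Longrightarrow> t \<in> tensor_ideal I \<Longrightarrow> (\<lambda>p. gtensor x y p + t p) \<in> tensor_ideal I"

definition is_ideal :: "('a::ab_group_add \<Rightarrow> 'r::comm_ring_1) set \<Rightarrow> bool" where
  "is_ideal I \<longleftrightarrow> (\<lambda>_. 0) \<in> I \<and> (\<forall>x\<in>I. \<forall>y\<in>I. (\<lambda>a. x a + y a) \<in> I)
      \<and> (\<forall>x\<in>I. \<forall>f. conv f x \<in> I)"

definition hopf_ideal :: "('a::ab_group_add \<Rightarrow> 'r::comm_ring_1) set \<Rightarrow> bool" where
  "hopf_ideal I \<longleftrightarrow> is_ideal I \<and> (\<forall>x\<in>I. comult x \<in> tensor_ideal I)
      \<and> (\<forall>x\<in>I. counit x = 0) \<and> (\<forall>x\<in>I. antipode x \<in> I)"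

text \<open>Local rings: nonunits form an ideal (the maximal ideal m).\<close>
definition maxideal :: "'r::comm_ring_1 set" where
  "maxideal = {x. \<not> x dvd 1}"

definition is_local :: "'r::comm_ring_1 itself \<Rightarrow> bool" where
  "is_local _ \<longleftrightarrow> (0::'r) \<noteq> 1 \<and> (\<forall>x\<in>(maxideal::'r set). \<forall>y\<in>maxideal. x + y \<in> maxideal)"

text \<open>Elements of R[H] = R[A]/I as cosets.\<close>
definition cls :: "('a \<Rightarrow> 'r::comm_ring_1) set \<Rightarrow> ('a \<Rightarrow> 'r) \<Rightarrow> ('a \<Rightarrow> 'r) set" where
  "cls I f = {g. (\<lambda>a. g a - f a) \<in> I}"

text \<open>I + m R[A], so that R[A]/(I + m R[A]) = R[H] \<otimes>_R k.\<close>
definition ext_ideal :: "('a \<Rightarrow> 'r::comm_ring_1) set \<Rightarrow> ('a \<Rightarrow> 'r) set" where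
  "ext_ideal I = {(\<lambda>a. x a + y a) | x y. x \<in> I \<and> (\<forall>a. y a \<in> maxideal)}"

definition grouplikes_H :: "('a \<Rightarrow> 'r::comm_ring_1) set \<Rightarrow> ('a \<Rightarrow> 'r) set set" where
  "grouplikes_H I = {cls I f | f. counit f = 1
      \<and> (\<lambda>p. comult f p - gtensor f f p) \<in> tensor_ideal I}"

text \<open>Group-like elements of the k-Hopf algebra R[H] \<otimes>_R k; its tensor square
over k is R[A\<times>A]/(tensor_ideal I + m R[A\<times>A]).\<close>
definition grouplikes_Hk :: "('a \<Rightarrow> 'r::comm_ring_1) set \<Rightarrow> ('a \<Rightarrow> 'r) set set" where
  "grouplikes_Hk I = {cls (ext_ideal I) f | f. counit f - 1 \<in> maxideal
      \<and> (\<exists>t u. t \<in> tensor_ideal I \<and> (\<forall>p. u p \<in> maxideal)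
              \<and> (\<forall>p. comult f p - gtensor f f p = t p + u p))}"

definition reduce :: "('a \<Rightarrow> 'r::comm_ring_1) set \<Rightarrow> ('a \<Rightarrow> 'r) set \<Rightarrow> ('a \<Rightarrow> 'r) set" where
  "reduce I C = {g. \<exists>f\<in>C. (\<lambda>a. g a - f a) \<in> ext_ideal I}"

end

theory Submission
  imports Defs
begin

text \<open>
  Let \<open>K = I + m R[A]\<close> (\<open>ext_ideal I\<close>), so that \<open>R[H] \<otimes>\<^sub>R k = R[A]/K\<close>. The images
  of the group elements \<open>delta c\<close> span \<open>R[A]/K\<close> over \<open>k\<close>; choose \<open>S\<close> so that the images of
  the \<open>delta s\<close>, \<open>s \<in> S\<close>, form a basis. Comparing comultiplication and counit in this basis,
  the coordinates of a group-like element of \<open>R[H] \<otimes>\<^sub>R k\<close> are orthogonal idempotents of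
  \<open>k\<close> with sum \<open>1\<close>, so the element is the image of a single \<open>delta s\<close>. It remains to lift:
  a group-like \<open>g\<close> of \<open>R[H]\<close> with \<open>g \<equiv> delta c\<close> modulo \<open>K\<close> satisfies \<open>g \<equiv> delta c\<close>
  modulo \<open>I\<close>. After a translation \<open>c = 0\<close>. Let \<open>N = |A|\<close> and let \<open>[k]\<close> denote
  pushforward along multiplication by \<open>k\<close>. Group-likeness gives \<open>[k+1] g \<equiv> g * [k] g\<close>
  modulo \<open>I\<close>, and \<open>[N] = [0]\<close>, so \<open>S = \<Sum>k<N. [k] g\<close> satisfies \<open>g * S \<equiv> S\<close> modulo
  \<open>I\<close>, while \<open>S \<equiv> N delta 0\<close> modulo \<open>K\<close>. Hence \<open>(g - delta 0) * (N - y) \<in> I\<close> for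
  some \<open>y \<in> m R[A]\<close>; as \<open>N\<close> is a unit, Nakayama's lemma gives \<open>g - delta 0 \<in> I\<close>.
\<close>

lemma mem_fun_cong: "x \<in> V \<Longrightarrow> (\<And>c. y c = x c) \<Longrightarrow> y \<in> V"
  by (metis ext)

definition is_submodule :: "('b \<Rightarrow> 'r::comm_ring_1) set \<Rightarrow> bool" where
  "is_submodule V \<longleftrightarrow> (\<lambda>_. 0) \<in> V \<and> (\<forall>x\<in>V. \<forall>y\<in>V. (\<lambda>c. x c + y c) \<in> V)
     \<and> (\<forall>x\<in>V. \<forall>r. (\<lambda>c. r * x c) \<in> V)"

lemma submodule_zero: "is_submodule V \<Longrightarrow> (\<lambda>_. 0) \<in> V"
  by (simp add: is_submodule_def)

lemma submodule_add: "is_submodule V \<Longrightarrow> x \<in> V \<Longrightarrow> y \<in> V \<Longrightarrow> (\<lambda>c. x c + y c) \<in> V"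
  by (simp add: is_submodule_def)

lemma submodule_smult: "is_submodule V \<Longrightarrow> x \<in> V \<Longrightarrow> (\<lambda>c. r * x c) \<in> V"
  by (simp add: is_submodule_def)

lemma submodule_uminus: "is_submodule V \<Longrightarrow> x \<in> V \<Longrightarrow> (\<lambda>c. - x c) \<in> V"
  using submodule_smult[of V x "-1"] by simp

lemma submodule_diff: "is_submodule V \<Longrightarrow> x \<in> V \<Longrightarrow> y \<in> V \<Longrightarrow> (\<lambda>c. x c - y c) \<in> V"
  using submodule_add[of V x "\<lambda>c. - y c"] submodule_uminus[of V y] by simp

lemma submodule_sum:
  assumes "is_submodule V" and "\<And>i. i \<in> S \<Longrightarrow> x i \<in> V"
  shows "(\<lambda>c. \<Sum>i\<in>S. r i * x i c) \<in> V"
  using assms(2)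
proof (induction S rule: infinite_finite_induct)
  case (insert s S)
  then have "(\<lambda>c. r s * x s c + (\<Sum>i\<in>S. r i * x i c)) \<in> V"
    using submodule_add[OF assms(1) submodule_smult[OF assms(1)]] by simp
  with insert show ?case by simp
qed (simp_all add: submodule_zero[OF assms(1)])

lemma cls_eq_iff: "is_submodule J \<Longrightarrow> cls J f = cls J g \<longleftrightarrow> (\<lambda>a. f a - g a) \<in> J"
proof
  assume J: "is_submodule J" and eq: "cls J f = cls J g"
  have "f \<in> cls J f" unfolding cls_def using submodule_zero[OF J] by simp
  with eq show "(\<lambda>a. f a - g a) \<in> J" unfolding cls_def by simp
next
  assume J: "is_submodule J" and d: "(\<lambda>a. f a - g a) \<in> J"
  show "cls J f = cls J g"
  proof (intro set_eqI iffI)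
    fix h assume "h \<in> cls J f"
    from submodule_add[OF J this[unfolded cls_def, simplified] d]
    show "h \<in> cls J g" unfolding cls_def by simp
  next
    fix h assume "h \<in> cls J g"
    from submodule_diff[OF J this[unfolded cls_def, simplified] d]
    show "h \<in> cls J f" unfolding cls_def by simp
  qed
qed

lemma maxideal_mult_left: "x \<in> maxideal \<Longrightarrow> y * x \<in> maxideal"
  by (auto simp: maxideal_def dest: dvd_mult_right)

lemma maxideal_mult_right: "x \<in> maxideal \<Longrightarrow> x * y \<in> maxideal"
  by (auto simp: maxideal_def dest: dvd_mult_left)

lemma maxideal_uminus: "x \<in> maxideal \<Longrightarrow> - x \<in> maxideal"
  by (simp add: maxideal_def)

lemma one_notin_maxideal: "1 \<notin> maxideal"
  by (simp add: maxideal_def)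

lemma unit_if_notin_maxideal: "x \<notin> maxideal \<Longrightarrow> \<exists>r. r * x = 1"
  unfolding maxideal_def by (metis dvd_def mem_Collect_eq mult.commute)

context
  assumes local: "is_local TYPE('r::comm_ring_1)"
begin

lemma maxideal_zero: "(0::'r) \<in> maxideal"
  using local by (simp add: is_local_def maxideal_def)

lemma maxideal_add: "x \<in> maxideal \<Longrightarrow> y \<in> maxideal \<Longrightarrow> (x + y :: 'r) \<in> maxideal"
  using local by (simp add: is_local_def)

lemma maxideal_diff: "x \<in> maxideal \<Longrightarrow> y \<in> maxideal \<Longrightarrow> (x - y :: 'r) \<in> maxideal"
  using maxideal_add[of x "- y"] maxideal_uminus[of y] by simp

lemma maxideal_sum: "(\<And>i. i \<in> S \<Longrightarrow> f i \<in> maxideal) \<Longrightarrow> (\<Sum>i\<in>S. f i :: 'r) \<in> maxideal"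
  by (induction S rule: infinite_finite_induct) (simp_all add: maxideal_zero maxideal_add)

lemma one_minus_maxideal_notin: "(x::'r) \<in> maxideal \<Longrightarrow> 1 - x \<notin> maxideal"
  using maxideal_add[of x "1 - x"] one_notin_maxideal by auto

end

definition maxideal_fun :: "('b \<Rightarrow> 'r::comm_ring_1) set" where
  "maxideal_fun = {y. \<forall>a. y a \<in> maxideal}"

lemma maxideal_fun_submodule:
  "is_local TYPE('r) \<Longrightarrow> is_submodule (maxideal_fun :: ('b \<Rightarrow> 'r::comm_ring_1) set)"
  by (auto simp: is_submodule_def maxideal_fun_def maxideal_zero maxideal_add maxideal_mult_left)

lemma ext_ideal_iff: "x \<in> ext_ideal I \<longleftrightarrow> (\<exists>i y. i \<in> I \<and> y \<in> maxideal_fun \<and> x = (\<lambda>a. i a + y a))"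
  by (auto simp: ext_ideal_def maxideal_fun_def)

context
  fixes I :: "('b \<Rightarrow> 'r::comm_ring_1) set"
  assumes local: "is_local TYPE('r)" and I: "is_submodule I"
begin

lemma ext_ideal_submodule: "is_submodule (ext_ideal I)"
  unfolding is_submodule_def
proof (intro conjI ballI allI)
  note M = maxideal_fun_submodule[OF local]
  show "(\<lambda>_. 0) \<in> ext_ideal I"
    unfolding ext_ideal_iff using submodule_zero[OF I] submodule_zero[OF M] by force
  fix x y assume "x \<in> ext_ideal I" "y \<in> ext_ideal I"
  then obtain i j m n where "i \<in> I" "m \<in> maxideal_fun" "x = (\<lambda>a. i a + m a)"
    and "j \<in> I" "n \<in> maxideal_fun" "y = (\<lambda>a. j a + n a)"
    unfolding ext_ideal_iff by blast
  then show "(\<lambda>c. x c + y c) \<in> ext_ideal I"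
    unfolding ext_ideal_iff using submodule_add[OF I] submodule_add[OF M]
    by (intro exI[of _ "\<lambda>c. i c + j c"] exI[of _ "\<lambda>c. m c + n c"]) (auto simp: algebra_simps)
next
  fix x r assume "x \<in> ext_ideal I"
  then obtain i m where "i \<in> I" "m \<in> maxideal_fun" "x = (\<lambda>a. i a + m a)"
    unfolding ext_ideal_iff by blast
  then show "(\<lambda>c. r * x c) \<in> ext_ideal I"
    unfolding ext_ideal_iff
    using submodule_smult[OF I] submodule_smult[OF maxideal_fun_submodule[OF local]]
    by (intro exI[of _ "\<lambda>c. r * i c"] exI[of _ "\<lambda>c. r * m c"]) (auto simp: algebra_simps)
qed

lemma ext_ideal_if_mem: "x \<in> I \<Longrightarrow> x \<in> ext_ideal I"
  unfolding ext_ideal_iff using submodule_zero[OF maxideal_fun_submodule[OF local]] by force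

lemma ext_ideal_if_maxideal_fun: "y \<in> maxideal_fun \<Longrightarrow> y \<in> ext_ideal I"
  unfolding ext_ideal_iff using submodule_zero[OF I] by force

end

definition delta :: "'a \<Rightarrow> 'a \<Rightarrow> 'r::comm_ring_1" where
  "delta c = (\<lambda>a. if a = c then 1 else 0)"

lemma sum_delta_left: "finite A \<Longrightarrow> (\<Sum>b\<in>A. delta a b * g b) = (if a \<in> A then g a else 0)"
  by (simp add: delta_def if_distrib[of "\<lambda>x. x * _"] eq_commute cong: if_cong)

lemma sum_delta_right: "finite A \<Longrightarrow> (\<Sum>b\<in>A. g b * delta b c) = (if c \<in> A then g c else 0)"
  by (simp add: delta_def if_distrib[of "\<lambda>x. _ * x"] eq_commute cong: if_cong)

lemma conv_commute:
  fixes f g :: "'a::{finite,ab_group_add} \<Rightarrow> 'r::comm_ring_1"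
  shows "conv f g = conv g f"
proof
  fix c
  show "conv f g c = conv g f c"
    unfolding conv_def
    by (rule sum.reindex_bij_witness[of _ "\<lambda>b. c - b" "\<lambda>a. c - a"]) (auto simp: mult.commute)
qed

lemma conv_delta_right:
  fixes f :: "'a::{finite,ab_group_add} \<Rightarrow> 'r::comm_ring_1"
  shows "conv f (delta d) = (\<lambda>c. f (c - d))"
proof
  fix c
  have "conv f (delta d) c = (\<Sum>a\<in>UNIV. if a = c - d then f a else 0)"
    unfolding conv_def delta_def by (intro sum.cong) (auto simp: algebra_simps)
  then show "conv f (delta d) c = f (c - d)" by simp
qed

lemma conv_delta_left:
  fixes f :: "'a::{finite,ab_group_add} \<Rightarrow> 'r::comm_ring_1"
  shows "conv (delta d) f = (\<lambda>c. f (c - d))"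
  using conv_delta_right conv_commute by metis

lemma conv_add_right: "conv f (\<lambda>c. x c + y c) = (\<lambda>c. conv f x c + conv f y c)"
  by (simp add: conv_def algebra_simps sum.distrib)

lemma conv_diff_right: "conv f (\<lambda>c. x c - y c) = (\<lambda>c. conv f x c - conv f y c)"
  by (simp add: conv_def algebra_simps sum_subtractf)

lemma conv_smult_right: "conv f (\<lambda>c. r * x c) = (\<lambda>c. r * conv f x c)"
  by (simp add: conv_def algebra_simps sum_distrib_left)

lemma conv_diff_left: "conv (\<lambda>c. x c - y c) f = (\<lambda>c. conv x f c - conv y f c)"
  by (simp add: conv_def algebra_simps sum_subtractf)

lemma conv_smult_left: "conv (\<lambda>c. r * x c) f = (\<lambda>c. r * conv x f c)"
  by (simp add: conv_def algebra_simps sum_distrib_left)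

lemma conv_sum_right: "conv f (\<lambda>c. \<Sum>k\<in>S. x k c) = (\<lambda>c. \<Sum>k\<in>S. conv f (x k) c)"
  by (simp add: conv_def sum_distrib_left sum.swap[of _ S])

context
  fixes I :: "('a::{finite, ab_group_add} \<Rightarrow> 'r::comm_ring_1) set"
  assumes I: "is_ideal I"
begin

lemma ideal_conv_left: "x \<in> I \<Longrightarrow> conv f x \<in> I"
  using I by (simp add: is_ideal_def)

lemma ideal_conv_right: "x \<in> I \<Longrightarrow> conv x f \<in> I"
  using ideal_conv_left conv_commute by metis

lemma ideal_submodule: "is_submodule I"
proof -
  have "(\<lambda>c. r * x c) \<in> I" if "x \<in> I" for x r
    using ideal_conv_left[OF that, of "\<lambda>a. r * delta 0 a"]
    by (simp add: conv_smult_left conv_delta_left)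
  with I show ?thesis by (auto simp: is_submodule_def is_ideal_def)
qed

lemma ideal_shift: "x \<in> I \<Longrightarrow> (\<lambda>a. x (a + d)) \<in> I"
  using ideal_conv_right[of x "delta (- d)"] by (simp add: conv_delta_right)

lemma ideal_ext_ideal:
  assumes local: "is_local TYPE('r)"
  shows "is_ideal (ext_ideal I)"
proof -
  have "conv f y \<in> maxideal_fun" if "y \<in> maxideal_fun" for f y :: "'a \<Rightarrow> 'r"
    using that unfolding maxideal_fun_def conv_def
    by (auto intro!: maxideal_sum[OF local] maxideal_mult_left)
  then have "conv f x \<in> ext_ideal I" if "x \<in> ext_ideal I" for f x
    using that ideal_conv_left unfolding ext_ideal_iff by (fastforce simp: conv_add_right)
  with ext_ideal_submodule[OF local ideal_submodule] show ?thesis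
    by (simp add: is_ideal_def is_submodule_def)
qed

end

lemma hopf_ideal_is_ideal: "hopf_ideal I \<Longrightarrow> is_ideal I"
  by (simp add: hopf_ideal_def)

lemma hopf_ideal_comult: "hopf_ideal I \<Longrightarrow> x \<in> I \<Longrightarrow> comult x \<in> tensor_ideal I"
  by (simp add: hopf_ideal_def)

lemma hopf_ideal_counit: "hopf_ideal I \<Longrightarrow> x \<in> I \<Longrightarrow> counit x = 0"
  by (simp add: hopf_ideal_def)

lemma hopf_ideal_submodule:
  "hopf_ideal (I :: ('a::{finite, ab_group_add} \<Rightarrow> 'r::comm_ring_1) set) \<Longrightarrow> is_submodule I"
  by (rule ideal_submodule[OF hopf_ideal_is_ideal])

definition grouplike :: "('a \<Rightarrow> 'r::comm_ring_1) set \<Rightarrow> ('a \<Rightarrow> 'r) \<Rightarrow> bool" where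
  "grouplike I f \<longleftrightarrow> counit f = 1 \<and> (\<lambda>p. comult f p - gtensor f f p) \<in> tensor_ideal I"

definition grouplike_mod :: "('a \<Rightarrow> 'r::comm_ring_1) set \<Rightarrow> ('a \<Rightarrow> 'r) \<Rightarrow> bool" where
  "grouplike_mod I f \<longleftrightarrow> counit f - 1 \<in> maxideal
     \<and> (\<lambda>p. comult f p - gtensor f f p) \<in> ext_ideal (tensor_ideal I)"

lemma grouplikes_H_eq: "grouplikes_H I = {cls I f | f. grouplike I f}"
  by (simp add: grouplikes_H_def grouplike_def)

lemma grouplikes_Hk_eq: "grouplikes_Hk I = {cls (ext_ideal I) f | f. grouplike_mod I f}"
proof -
  have "(\<lambda>p. comult f p - gtensor f f p) \<in> ext_ideal (tensor_ideal I) \<longleftrightarrow>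
      (\<exists>t u. t \<in> tensor_ideal I \<and> (\<forall>p. u p \<in> maxideal)
          \<and> (\<forall>p. comult f p - gtensor f f p = t p + u p))" for f
    unfolding ext_ideal_def by (auto simp: fun_eq_iff)
  then show ?thesis unfolding grouplikes_Hk_def grouplike_mod_def by simp
qed

lemma grouplike_delta: "grouplike I (delta (c::'a::finite))"
proof -
  have "(\<lambda>p. comult (delta c) p - gtensor (delta c) (delta c) p) \<in> tensor_ideal I"
    by (rule mem_fun_cong[OF tensor_ideal.zero]) (auto simp: comult_def gtensor_def delta_def)
  moreover have "counit (delta c) = 1"
    by (simp add: counit_def delta_def)
  ultimately show ?thesis by (simp add: grouplike_def)
qed

lemma grouplike_mod_if_grouplike:
  assumes local: "is_local TYPE('r)" and f: "grouplike I (f :: 'a \<Rightarrow> 'r::comm_ring_1)"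
  shows "grouplike_mod I f"
proof -
  have "(\<lambda>p. comult f p - gtensor f f p) \<in> ext_ideal (tensor_ideal I)"
    unfolding ext_ideal_iff maxideal_fun_def using f maxideal_zero[OF local]
    by (intro exI[of _ "\<lambda>p. comult f p - gtensor f f p"] exI[of _ "\<lambda>_. 0"])
      (simp add: grouplike_def)
  with f show ?thesis by (simp add: grouplike_def grouplike_mod_def maxideal_zero[OF local])
qed

lemma tensor_ideal_shift:
  fixes I :: "('a::{finite, ab_group_add} \<Rightarrow> 'r::comm_ring_1) set"
  assumes I: "is_ideal I"
  shows "F \<in> tensor_ideal I \<Longrightarrow> (\<lambda>p. F (fst p + d, snd p + d)) \<in> tensor_ideal I"
proof (induction F rule: tensor_ideal.induct)
  case zero
  then show ?case by (simp add: tensor_ideal.zero)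
next
  case (left x t y)
  from tensor_ideal.left[OF ideal_shift[OF I left(1)] left(3)]
  show ?case by (simp add: gtensor_def case_prod_beta)
next
  case (right y t x)
  from tensor_ideal.right[OF ideal_shift[OF I right(1)] right(3)]
  show ?case by (simp add: gtensor_def case_prod_beta)
qed

lemma grouplike_shift:
  fixes g :: "'a::{finite, ab_group_add} \<Rightarrow> 'r::comm_ring_1"
  assumes I: "is_ideal I" and g: "grouplike I g"
  shows "grouplike I (\<lambda>a. g (a + c))"
proof -
  have "counit (\<lambda>a. g (a + c)) = counit g"
    unfolding counit_def by (rule sum.reindex_bij_witness[of _ "\<lambda>a. a - c" "\<lambda>a. a + c"]) auto
  moreover have "(\<lambda>p. comult (\<lambda>a. g (a + c)) p - gtensor (\<lambda>a. g (a + c)) (\<lambda>a. g (a + c)) p)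
      = (\<lambda>p. comult g (fst p + c, snd p + c) - gtensor g g (fst p + c, snd p + c))"
    by (auto simp: comult_def gtensor_def)
  ultimately show ?thesis
    using g tensor_ideal_shift[OF I, of "\<lambda>p. comult g p - gtensor g g p" c]
    by (simp add: grouplike_def)
qed

context
  fixes I :: "('a::ab_group_add \<Rightarrow> 'r::comm_ring_1) set"
  assumes local: "is_local TYPE('r)" and hopf: "hopf_ideal I"
begin

lemma comult_ext_ideal: "x \<in> ext_ideal I \<Longrightarrow> comult x \<in> ext_ideal (tensor_ideal I)"
proof -
  assume "x \<in> ext_ideal I"
  then obtain i y where "i \<in> I" "y \<in> maxideal_fun" "x = (\<lambda>a. i a + y a)"
    unfolding ext_ideal_iff by blast
  moreover from this have "comult i \<in> tensor_ideal I" and "comult y \<in> maxideal_fun"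
    using hopf_ideal_comult[OF hopf]
    by (auto simp: maxideal_fun_def comult_def maxideal_zero[OF local])
  ultimately show ?thesis
    unfolding ext_ideal_iff
    by (intro exI[of _ "comult i"] exI[of _ "comult y"]) (auto simp: comult_def)
qed

lemma counit_ext_ideal: "x \<in> ext_ideal I \<Longrightarrow> counit x \<in> maxideal"
proof -
  assume "x \<in> ext_ideal I"
  then obtain i y where "i \<in> I" "y \<in> maxideal_fun" "x = (\<lambda>a. i a + y a)"
    unfolding ext_ideal_iff by blast
  moreover from this have "counit i = 0" and "counit y \<in> maxideal"
    using hopf_ideal_counit[OF hopf] unfolding maxideal_fun_def counit_def
    by (auto intro!: maxideal_sum[OF local])
  ultimately show ?thesis by (simp add: counit_def sum.distrib)
qed

end

section \<open>Nakayama's lemma\<close>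

lemma submodule_nakayama:
  fixes w :: "'i \<Rightarrow> 'b \<Rightarrow> 'r::comm_ring_1"
  assumes local: "is_local TYPE('r)" and V: "is_submodule V" and "finite S"
    and "\<And>a b. M b a \<in> maxideal"
    and "\<And>b. b \<in> S \<Longrightarrow> (\<lambda>c. w b c - (\<Sum>a\<in>S. M b a * w a c)) \<in> V"
  shows "b \<in> S \<Longrightarrow> w b \<in> V"
  using assms(3-)
proof (induction S arbitrary: M b rule: finite_induct)
  case empty
  then show ?case by simp
next
  case (insert s S)
  have rel_s: "(\<lambda>c. (1 - M s s) * w s c - (\<Sum>a\<in>S. M s a * w a c)) \<in> V"
    using insert.prems(3)[of s] insert.hyps by (simp add: algebra_simps)
  obtain r where r: "r * (1 - M s s) = 1"
    using unit_if_notin_maxideal one_minus_maxideal_notin[OF local insert.prems(2)] by blast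
  have ws: "(\<lambda>c. w s c - (\<Sum>a\<in>S. (r * M s a) * w a c)) \<in> V"
  proof (rule mem_fun_cong[OF submodule_smult[OF V rel_s, of r]])
    fix c
    have "r - r * M s s = 1" using r by (simp add: algebra_simps)
    then show "w s c - (\<Sum>a\<in>S. (r * M s a) * w a c)
        = r * ((1 - M s s) * w s c - (\<Sum>a\<in>S. M s a * w a c))"
      by (simp add: right_diff_distrib sum_distrib_left mult.assoc[symmetric] r)
  qed
  \<comment> \<open>substituting \<open>ws\<close> eliminates \<open>w s\<close> from the other relations\<close>
  define M' where "M' b a = M b a + M b s * r * M s a" for b a
  have wS: "w b \<in> V" if "b \<in> S" for b
  proof (rule insert.IH[of b M', OF that])
    show "M' b a \<in> maxideal" for a b
      unfolding M'_def using insert.prems(2)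
      by (simp add: maxideal_add[OF local] maxideal_mult_right)
    fix b assume b: "b \<in> S"
    have rel_b: "(\<lambda>c. w b c - (M b s * w s c + (\<Sum>a\<in>S. M b a * w a c))) \<in> V"
      using insert.prems(3)[of b] insert.hyps b by simp
    show "(\<lambda>c. w b c - (\<Sum>a\<in>S. M' b a * w a c)) \<in> V"
    proof (rule mem_fun_cong[OF submodule_add[OF V rel_b submodule_smult[OF V ws]]])
      fix c
      show "w b c - (\<Sum>a\<in>S. M' b a * w a c) = w b c - (M b s * w s c + (\<Sum>a\<in>S. M b a * w a c))
          + M b s * (w s c - (\<Sum>a\<in>S. r * M s a * w a c))"
        by (simp add: M'_def distrib_right sum.distrib sum_distrib_left mult.assoc
            right_diff_distrib)
    qed
  qed
  then have "(\<lambda>c. \<Sum>a\<in>S. (r * M s a) * w a c) \<in> V"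
    by (rule submodule_sum[OF V])
  from submodule_add[OF V ws this] wS insert.prems(1) show ?case by auto
qed

lemma ideal_cancel_one_minus:
  fixes x :: "'a::{finite, ab_group_add} \<Rightarrow> 'r::comm_ring_1"
  assumes local: "is_local TYPE('r)" and I: "is_ideal I" and y: "y \<in> maxideal_fun"
    and rel: "(\<lambda>c. x c - conv x y c) \<in> I"
  shows "x \<in> I"
proof -
  have "(\<lambda>c. x (c - b)) \<in> I" for b
  proof (rule submodule_nakayama[OF local ideal_submodule[OF I] finite_UNIV, 
        where w="\<lambda>b c. x (c - b)" and M="\<lambda>b a. y (a - b)"])
    show "y (a - b) \<in> maxideal" for a b
      using y unfolding maxideal_fun_def by simp
    fix b :: 'a
    show "(\<lambda>c. x (c - b) - (\<Sum>a\<in>UNIV. y (a - b) * x (c - a))) \<in> I"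
    proof (rule mem_fun_cong[OF ideal_shift[OF I rel, of "- b"]])
      fix c
      have "conv x y (c - b) = (\<Sum>a\<in>UNIV. y (a - b) * x (c - a))"
        unfolding conv_def
        by (rule sum.reindex_bij_witness[of _ "\<lambda>a. c - a" "\<lambda>d. c - d"]) (auto simp: algebra_simps)
      then show "x (c - b) - (\<Sum>a\<in>UNIV. y (a - b) * x (c - a)) = x (c + - b) - conv x y (c + - b)"
        by simp
    qed
  qed simp
  from this[of 0] show ?thesis by simp
qed

section \<open>Lifting group-likes when the order of the group is a unit\<close>

primrec nsmul :: "nat \<Rightarrow> 'a::monoid_add \<Rightarrow> 'a" where
  "nsmul 0 a = 0"
| "nsmul (Suc k) a = a + nsmul k a"

lemma nsmul_zero [simp]: "nsmul k (0::'a::monoid_add) = 0"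
  by (induction k) simp_all

lemma nsmul_Suc_eq: "nsmul (Suc k) = (\<lambda>a. a + nsmul k a)"
  by (rule ext) simp

lemma sum_constant_nsmul: "finite A \<Longrightarrow> (\<Sum>x\<in>A. a) = nsmul (card A) (a::'a::comm_monoid_add)"
  by (induction A rule: finite_induct) auto

lemma nsmul_card_UNIV: "nsmul (card (UNIV::'a::{finite,ab_group_add} set)) (a::'a) = 0"
proof -
  have "(\<Sum>x\<in>(UNIV::'a set). x + a) = (\<Sum>x\<in>UNIV. x)"
    by (rule sum.reindex_bij_witness[of _ "\<lambda>x. x - a" "\<lambda>x. x + a"]) auto
  then show ?thesis by (simp add: sum.distrib sum_constant_nsmul)
qed

definition pushforward :: "('a \<Rightarrow> 'b) \<Rightarrow> ('a \<Rightarrow> 'r::comm_monoid_add) \<Rightarrow> ('b \<Rightarrow> 'r)" where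
  "pushforward h x = (\<lambda>c. \<Sum>a\<in>UNIV. if h a = c then x a else 0)"

lemma pushforward_add: "pushforward h (\<lambda>a. x a + y a) = (\<lambda>c. pushforward h x c + pushforward h y c)"
  by (auto simp: pushforward_def simp flip: sum.distrib intro!: sum.cong)

lemma pushforward_diff:
  "pushforward h (\<lambda>a. x a - y a) = (\<lambda>c. pushforward h x c - pushforward h y c :: 'r::ab_group_add)"
  by (auto simp: pushforward_def simp flip: sum_subtractf intro!: sum.cong)

lemma pushforward_delta:
  fixes c :: "'a::finite"
  shows "pushforward h (delta c) = (delta (h c) :: 'b \<Rightarrow> 'r::comm_ring_1)"
proof
  fix b
  have "pushforward h (delta c) b
      = (\<Sum>a\<in>UNIV. if a = c then (if h a = b then 1 else 0) else (0::'r))"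
    unfolding pushforward_def delta_def by (intro sum.cong) auto
  also have "\<dots> = delta (h c) b"
    by (simp add: delta_def eq_commute)
  finally show "pushforward h (delta c) b = (delta (h c) b :: 'r)" .
qed

lemma pushforward_zero_map: "pushforward (\<lambda>_. 0) x = (\<lambda>c. counit x * delta 0 c)"
  by (auto simp: pushforward_def counit_def delta_def)

lemma sum_UNIV_prod:
  fixes g :: "'a::finite \<times> 'b::finite \<Rightarrow> 'r::comm_monoid_add"
  shows "(\<Sum>p\<in>UNIV. g p) = (\<Sum>a\<in>UNIV. \<Sum>b\<in>UNIV. g (a, b))"
  by (simp add: sum.cartesian_product UNIV_Times_UNIV[symmetric] del: UNIV_Times_UNIV)

context
  fixes h :: "'a::{finite, ab_group_add} \<Rightarrow> 'a"
begin

lemma pushforward_gtensor: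
  fixes x y :: "'a \<Rightarrow> 'r::comm_ring_1"
  shows "pushforward (\<lambda>p. fst p + h (snd p)) (gtensor x y) = conv x (pushforward h y)"
proof
  fix c
  have "pushforward (\<lambda>p. fst p + h (snd p)) (gtensor x y) c
      = (\<Sum>a\<in>UNIV. \<Sum>b\<in>UNIV. if h b = c - a then x a * y b else 0)"
    unfolding pushforward_def sum_UNIV_prod
    by (intro sum.cong refl) (simp add: gtensor_def eq_diff_eq add.commute)
  also have "\<dots> = conv x (pushforward h y) c"
    unfolding conv_def pushforward_def sum_distrib_left by (intro sum.cong refl) auto
  finally show "pushforward (\<lambda>p. fst p + h (snd p)) (gtensor x y) c = conv x (pushforward h y) c" .
qed

lemma pushforward_comult:
  fixes x :: "'a \<Rightarrow> 'r::comm_ring_1"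
  shows "pushforward (\<lambda>p. fst p + h (snd p)) (comult x) = pushforward (\<lambda>a. a + h a) x"
proof
  fix c
  have "pushforward (\<lambda>p. fst p + h (snd p)) (comult x) c
      = (\<Sum>a\<in>UNIV. \<Sum>b\<in>UNIV. if b = a then (if a + h a = c then x a else 0) else 0)"
    unfolding pushforward_def sum_UNIV_prod by (intro sum.cong refl) (simp add: comult_def)
  then show "pushforward (\<lambda>p. fst p + h (snd p)) (comult x) c = pushforward (\<lambda>a. a + h a) x c"
    by (simp add: pushforward_def)
qed

lemma pushforward_tensor_ideal:
  fixes I :: "('a \<Rightarrow> 'r::comm_ring_1) set"
  assumes I: "is_ideal I" and h: "\<And>y. y \<in> I \<Longrightarrow> pushforward h y \<in> I"
  shows "F \<in> tensor_ideal I \<Longrightarrow> pushforward (\<lambda>p. fst p + h (snd p)) F \<in> I"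
proof (induction F rule: tensor_ideal.induct)
  case zero
  then show ?case
    using submodule_zero[OF ideal_submodule[OF I]] by (simp add: pushforward_def)
next
  case (left x t y)
  then show ?case
    by (simp add: pushforward_add pushforward_gtensor submodule_add[OF ideal_submodule[OF I]]
        ideal_conv_right[OF I])
next
  case (right y t x)
  then show ?case
    by (simp add: pushforward_add pushforward_gtensor submodule_add[OF ideal_submodule[OF I]]
        ideal_conv_left[OF I] h)
qed

end

lemma pushforward_nsmul_ideal:
  fixes I :: "('a::{finite, ab_group_add} \<Rightarrow> 'r::comm_ring_1) set"
  assumes hopf: "hopf_ideal I"
  shows "y \<in> I \<Longrightarrow> pushforward (nsmul k) y \<in> I"
proof (induction k arbitrary: y)
  case 0
  have "nsmul 0 = (\<lambda>_::'a. 0::'a)"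
    by (rule ext) simp
  with hopf_ideal_counit[OF hopf 0] have "pushforward (nsmul 0) y = (\<lambda>_. 0)"
    by (simp add: pushforward_zero_map)
  with submodule_zero[OF hopf_ideal_submodule[OF hopf]] show ?case
    by (simp only:)
next
  case (Suc k)
  have "pushforward (\<lambda>p. fst p + nsmul k (snd p)) (comult y) \<in> I"
    by (rule pushforward_tensor_ideal[OF hopf_ideal_is_ideal[OF hopf] Suc.IH
          hopf_ideal_comult[OF hopf Suc.prems]])
  then show ?case
    by (simp add: nsmul_Suc_eq pushforward_comult)
qed

lemma pushforward_maxideal_fun:
  assumes local: "is_local TYPE('r)" and y: "y \<in> maxideal_fun"
  shows "pushforward h (y :: 'a \<Rightarrow> 'r::comm_ring_1) \<in> maxideal_fun"
  using y unfolding maxideal_fun_def pushforward_def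
  by (auto intro!: maxideal_sum[OF local] simp: maxideal_zero[OF local])

lemma pushforward_nsmul_ext_ideal:
  fixes I :: "('a::{finite, ab_group_add} \<Rightarrow> 'r::comm_ring_1) set"
  assumes local: "is_local TYPE('r)" and hopf: "hopf_ideal I"
  shows "x \<in> ext_ideal I \<Longrightarrow> pushforward (nsmul k) x \<in> ext_ideal I"
proof -
  assume "x \<in> ext_ideal I"
  then obtain i y where "i \<in> I" "y \<in> maxideal_fun" "x = (\<lambda>a. i a + y a)"
    unfolding ext_ideal_iff by blast
  then have "pushforward (nsmul k) x = (\<lambda>c. pushforward (nsmul k) i c + pushforward (nsmul k) y c)"
    by (simp add: pushforward_add)
  moreover have "pushforward (nsmul k) i \<in> I"
    using \<open>i \<in> I\<close> by (rule pushforward_nsmul_ideal[OF hopf])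
  moreover have "pushforward (nsmul k) y \<in> maxideal_fun"
    using \<open>y \<in> maxideal_fun\<close> by (rule pushforward_maxideal_fun[OF local])
  ultimately show ?thesis
    unfolding ext_ideal_iff by blast
qed

lemma grouplike_averaging:
  fixes u :: "'a::{finite, ab_group_add} \<Rightarrow> 'r::comm_ring_1"
  assumes hopf: "hopf_ideal I" and u: "grouplike I u"
  defines "S \<equiv> \<lambda>c. \<Sum>k<card (UNIV::'a set). pushforward (nsmul k) u c"
  shows "(\<lambda>c. S c - conv u S c) \<in> I"
proof -
  let ?N = "card (UNIV :: 'a set)"
  note I = hopf_ideal_is_ideal[OF hopf]
  have step: "(\<lambda>c. pushforward (nsmul (Suc k)) u c - conv u (pushforward (nsmul k) u) c) \<in> I" for k
  proof -
    have "pushforward (\<lambda>p. fst p + nsmul k (snd p)) (\<lambda>p. comult u p - gtensor u u p) \<in> I"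
      using u pushforward_nsmul_ideal[OF hopf]
      by (intro pushforward_tensor_ideal[OF I]) (simp_all add: grouplike_def)
    then show ?thesis
      unfolding nsmul_Suc_eq by (simp only: pushforward_diff pushforward_comult pushforward_gtensor)
  qed
  have "(\<lambda>c. \<Sum>k<?N. pushforward (nsmul (Suc k)) u c - conv u (pushforward (nsmul k) u) c) \<in> I"
    using submodule_sum[OF ideal_submodule[OF I] step, where r = "\<lambda>_. 1"] by simp
  moreover have "(\<Sum>k<?N. pushforward (nsmul (Suc k)) u c) = S c" for c
  proof -
    have "nsmul ?N = (nsmul 0 :: 'a \<Rightarrow> 'a)"
      by (rule ext) (simp add: nsmul_card_UNIV)
    then have "(\<Sum>k<Suc ?N. pushforward (nsmul k) u c) = pushforward (nsmul 0) u c + S c"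
      unfolding S_def by simp
    then show ?thesis
      unfolding sum.lessThan_Suc_shift by simp
  qed
  moreover have "(\<Sum>k<?N. conv u (pushforward (nsmul k) u) c) = conv u S c" for c
    unfolding S_def conv_sum_right by simp
  ultimately show ?thesis
    by (simp add: sum_subtractf)
qed

lemma grouplike_lift_delta_zero:
  fixes u :: "'a::{finite, ab_group_add} \<Rightarrow> 'r::comm_ring_1"
  assumes local: "is_local TYPE('r)" and hopf: "hopf_ideal I"
    and N: "of_nat (card (UNIV :: 'a set)) dvd (1::'r)"
    and u: "grouplike I u" and red: "(\<lambda>a. u a - delta 0 a) \<in> ext_ideal I"
  shows "(\<lambda>a. u a - delta 0 a) \<in> I"
proof -
  define N where "N = card (UNIV :: 'a set)"
  define S where "S = (\<lambda>c. \<Sum>k<N. pushforward (nsmul k) u c)"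
  define v where "v = (\<lambda>a. u a - delta 0 a)"
  note I = hopf_ideal_is_ideal[OF hopf]
  note V = ideal_submodule[OF I]
  have vS: "conv v S \<in> I"
  proof -
    have "conv v S = (\<lambda>c. - (S c - conv u S c))"
      unfolding v_def conv_diff_left conv_delta_left by simp
    with submodule_uminus[OF V grouplike_averaging[OF hopf u]] show ?thesis
      by (simp add: S_def N_def)
  qed
  have "(\<lambda>c. S c - of_nat N * delta 0 c) \<in> ext_ideal I"
  proof -
    have "(\<lambda>c. \<Sum>k<N. 1 * pushforward (nsmul k) v c) \<in> ext_ideal I"
      by (intro submodule_sum ext_ideal_submodule[OF local V]
          pushforward_nsmul_ext_ideal[OF local hopf])
        (simp add: red v_def)
    moreover have "pushforward (nsmul k) v = (\<lambda>c. pushforward (nsmul k) u c - delta 0 c)" for k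
      unfolding v_def pushforward_diff pushforward_delta by simp
    ultimately show ?thesis
      by (simp add: S_def sum_subtractf)
  qed
  then obtain i y where i: "i \<in> I" and y: "y \<in> maxideal_fun"
    and iy: "(\<lambda>c. S c - of_nat N * delta 0 c) = (\<lambda>c. i c + y c)"
    unfolding ext_ideal_iff by blast
  have "conv v (\<lambda>c. S c - of_nat N * delta 0 c) = (\<lambda>c. conv v S c - of_nat N * v c)"
    by (simp add: conv_diff_right conv_smult_right conv_delta_right)
  then have "(\<lambda>c. of_nat N * v c + conv v y c) = (\<lambda>c. conv v S c - conv v i c)"
    unfolding iy conv_add_right by (auto simp: fun_eq_iff algebra_simps dest: fun_cong)
  then have Nv: "(\<lambda>c. of_nat N * v c + conv v y c) \<in> I"
    using submodule_diff[OF V vS ideal_conv_left[OF I i]] by simp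
  obtain r where r: "r * of_nat N = (1::'r)"
    using N unfolding N_def by (metis dvd_def mult.commute)
  have "(\<lambda>c. v c - conv v (\<lambda>a. (- r) * y a) c) = (\<lambda>c. r * (of_nat N * v c + conv v y c))"
    unfolding conv_smult_right by (simp add: fun_eq_iff distrib_left mult.assoc[symmetric] r)
  with submodule_smult[OF V Nv, of r] have "(\<lambda>c. v c - conv v (\<lambda>a. (- r) * y a) c) \<in> I"
    by simp
  moreover have "(\<lambda>a. (- r) * y a) \<in> maxideal_fun"
    using submodule_smult[OF maxideal_fun_submodule[OF local] y] .
  ultimately show ?thesis
    unfolding v_def[symmetric] by (rule ideal_cancel_one_minus[OF local I, rotated])
qed

lemma grouplike_lift_delta:
  fixes g :: "'a::{finite, ab_group_add} \<Rightarrow> 'r::comm_ring_1"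
  assumes local: "is_local TYPE('r)" and hopf: "hopf_ideal I"
    and N: "of_nat (card (UNIV :: 'a set)) dvd (1::'r)"
    and g: "grouplike I g" and red: "(\<lambda>a. g a - delta c a) \<in> ext_ideal I"
  shows "(\<lambda>a. g a - delta c a) \<in> I"
proof -
  note I = hopf_ideal_is_ideal[OF hopf]
  have "(\<lambda>a. g (a + c) - delta 0 a) \<in> ext_ideal I"
    using ideal_shift[OF ideal_ext_ideal[OF I local] red, of c] by (simp add: delta_def)
  with grouplike_shift[OF I g] have "(\<lambda>a. g (a + c) - delta 0 a) \<in> I"
    by (rule grouplike_lift_delta_zero[OF local hopf N])
  from ideal_shift[OF I this, of "- c"] show ?thesis
    by (simp add: delta_def)
qed

section \<open>Group-likes of the special fibre\<close>

lemma orthogonal_idempotents_mod_maxideal: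
  fixes e :: "'i \<Rightarrow> 'r::comm_ring_1"
  assumes local: "is_local TYPE('r)"
    and idem: "\<And>s t. s \<in> S \<Longrightarrow> t \<in> S \<Longrightarrow> e s * e t - (if s = t then e s else 0) \<in> maxideal"
    and sum: "(\<Sum>s\<in>S. e s) - 1 \<in> maxideal"
  obtains s0 where "s0 \<in> S" and "\<And>s. s \<in> S \<Longrightarrow> e s - (if s = s0 then 1 else 0) \<in> maxideal"
proof -
  have "\<exists>s0\<in>S. e s0 \<notin> maxideal"
  proof (rule ccontr)
    assume "\<not> ?thesis"
    then have "(\<Sum>s\<in>S. e s) \<in> maxideal"
      by (auto intro: maxideal_sum[OF local])
    from maxideal_diff[OF local this sum] show False
      by (simp add: one_notin_maxideal)
  qed
  then obtain s0 where s0: "s0 \<in> S" "e s0 \<notin> maxideal"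
    by blast
  obtain r where r: "r * e s0 = 1"
    using unit_if_notin_maxideal[OF s0(2)] by blast
  have "e s - (if s = s0 then 1 else 0) = r * (e s0 * e s - (if s0 = s then e s0 else 0))" for s
    by (auto simp: algebra_simps r simp flip: mult.assoc)
  with idem s0(1) have "e s - (if s = s0 then 1 else 0) \<in> maxideal" if "s \<in> S" for s
    using that by (simp add: maxideal_mult_left)
  with s0(1) show ?thesis by (rule that)
qed

definition residue_independent :: "('a \<Rightarrow> 'r::comm_ring_1) set \<Rightarrow> 'a set \<Rightarrow> bool" where
  "residue_independent K S \<longleftrightarrow>
     (\<forall>co. (\<lambda>x. \<Sum>s\<in>S. co s * delta s x) \<in> K \<longrightarrow> (\<forall>s\<in>S. co s \<in> maxideal))"

text \<open>Over the residue field, the \<open>delta s\<close> with \<open>s \<in> S\<close> form a basis of \<open>R[A]\<close> modulo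
  \<open>ext_ideal I\<close>, and \<open>Lam a s\<close> are the coordinates of \<open>delta a\<close> in this basis.\<close>

locale residue_basis =
  fixes I :: "('a::{finite, ab_group_add} \<Rightarrow> 'r::comm_ring_1) set"
    and S :: "'a set" and Lam :: "'a \<Rightarrow> 'a \<Rightarrow> 'r"
  assumes local: "is_local TYPE('r)" and hopf: "hopf_ideal I"
    and independent: "residue_independent (ext_ideal I) S"
    and spanning: "\<And>a. (\<lambda>x. delta a x - (\<Sum>s\<in>S. Lam a s * delta s x)) \<in> ext_ideal I"

lemma residue_basis_exists:
  fixes I :: "('a::{finite, ab_group_add} \<Rightarrow> 'r::comm_ring_1) set"
  assumes local: "is_local TYPE('r)" and hopf: "hopf_ideal I"
  shows "\<exists>S Lam. residue_basis I S Lam"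
proof -
  note I = hopf_ideal_submodule[OF hopf]
  note K = ext_ideal_submodule[OF local I]
  have "finite {S :: 'a set. residue_independent (ext_ideal I) S}"
    by simp
  moreover have "{} \<in> {S. residue_independent (ext_ideal I) S}"
    by (simp add: residue_independent_def)
  ultimately obtain S where S: "residue_independent (ext_ideal I) S"
    and maximal: "\<And>S'. residue_independent (ext_ideal I) S' \<Longrightarrow> S \<subseteq> S' \<Longrightarrow> S = S'"
    using finite_has_maximal[of "{S. residue_independent (ext_ideal I) S}"] by blast
  have "\<exists>l. (\<lambda>x. delta a x - (\<Sum>s\<in>S. l s * delta s x)) \<in> ext_ideal I" for a
  proof (cases "a \<in> S")
    case True
    have "(\<lambda>x. delta a x - (\<Sum>s\<in>S. delta a s * delta s x)) \<in> ext_ideal I"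
      by (rule mem_fun_cong[OF submodule_zero[OF K]]) (simp add: True sum_delta_left)
    then show ?thesis by (rule exI[of _ "delta a"])
  next
    case False
    then obtain co s where co: "(\<lambda>x. \<Sum>s\<in>insert a S. co s * delta s x) \<in> ext_ideal I"
      and s: "s \<in> insert a S" "co s \<notin> maxideal"
      using maximal[of "insert a S"] unfolding residue_independent_def by blast
    have co': "(\<lambda>x. co a * delta a x + (\<Sum>s\<in>S. co s * delta s x)) \<in> ext_ideal I"
      using co False by simp
    have "co a \<notin> maxideal"
    proof
      assume "co a \<in> maxideal"
      then have "(\<lambda>x. co a * delta a x) \<in> maxideal_fun"
        by (simp add: maxideal_fun_def maxideal_mult_right)
      then have "(\<lambda>x. co a * delta a x) \<in> ext_ideal I"
        by (rule ext_ideal_if_maxideal_fun[OF local I])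
      from submodule_diff[OF K co' this] have "(\<lambda>x. \<Sum>s\<in>S. co s * delta s x) \<in> ext_ideal I"
        by simp
      with S s \<open>co a \<in> maxideal\<close> show False
        unfolding residue_independent_def by blast
    qed
    then obtain r where r: "r * co a = 1"
      using unit_if_notin_maxideal by blast
    have "(\<lambda>x. delta a x - (\<Sum>s\<in>S. (- (r * co s)) * delta s x)) \<in> ext_ideal I"
    proof (rule mem_fun_cong[OF submodule_smult[OF K co', of r]])
      fix x
      show "delta a x - (\<Sum>s\<in>S. (- (r * co s)) * delta s x)
          = r * (co a * delta a x + (\<Sum>s\<in>S. co s * delta s x))"
        by (simp add: distrib_left sum_distrib_left mult.assoc[symmetric] r sum_negf)
    qed
    then show ?thesis by (rule exI[of _ "\<lambda>s. - (r * co s)"])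
  qed
  then obtain Lam where "\<And>a. (\<lambda>x. delta a x - (\<Sum>s\<in>S. Lam a s * delta s x)) \<in> ext_ideal I"
    by metis
  with local hopf S show ?thesis
    unfolding residue_basis_def by blast
qed

definition coord :: "('a \<Rightarrow> 'a \<Rightarrow> 'r::comm_ring_1) \<Rightarrow> 'a \<Rightarrow> ('a \<Rightarrow> 'r) \<Rightarrow> 'r" where
  "coord Lam s x = (\<Sum>a\<in>UNIV. x a * Lam a s)"

definition tensor_coord :: "('a \<Rightarrow> 'a \<Rightarrow> 'r::comm_ring_1) \<Rightarrow> 'a \<Rightarrow> 'a \<Rightarrow> ('a \<times> 'a \<Rightarrow> 'r) \<Rightarrow> 'r" where
  "tensor_coord Lam s t F = (\<Sum>p\<in>UNIV. F p * Lam (fst p) s * Lam (snd p) t)"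

lemma tensor_coord_add:
  "tensor_coord Lam s t (\<lambda>p. F p + G p) = tensor_coord Lam s t F + tensor_coord Lam s t G"
  by (simp add: tensor_coord_def distrib_right sum.distrib)

lemma tensor_coord_diff:
  "tensor_coord Lam s t (\<lambda>p. F p - G p) = tensor_coord Lam s t F - tensor_coord Lam s t G"
  by (simp add: tensor_coord_def left_diff_distrib sum_subtractf)

lemma tensor_coord_gtensor:
  fixes x y :: "'a::finite \<Rightarrow> 'r::comm_ring_1"
  shows "tensor_coord Lam s t (gtensor x y) = coord Lam s x * coord Lam t y"
  unfolding tensor_coord_def coord_def sum_UNIV_prod sum_product gtensor_def
  by (intro sum.cong refl) (simp add: mult_ac)

lemma tensor_coord_comult:
  fixes x :: "'a::finite \<Rightarrow> 'r::comm_ring_1"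
  shows "tensor_coord Lam s t (comult x) = (\<Sum>a\<in>UNIV. x a * Lam a s * Lam a t)"
  unfolding tensor_coord_def sum_UNIV_prod
proof (intro sum.cong refl)
  fix a
  have "(\<Sum>b\<in>UNIV. comult x (a, b) * Lam (fst (a, b)) s * Lam (snd (a, b)) t)
      = (\<Sum>b\<in>UNIV. if a = b then x a * Lam a s * Lam b t else 0)"
    by (intro sum.cong refl) (simp add: comult_def)
  then show "(\<Sum>b\<in>UNIV. comult x (a, b) * Lam (fst (a, b)) s * Lam (snd (a, b)) t)
      = x a * Lam a s * Lam a t"
    by simp
qed

context residue_basis
begin

lemma ext_ideal_is_submodule: "is_submodule (ext_ideal I)"
  by (rule ext_ideal_submodule[OF local hopf_ideal_submodule[OF hopf]])

lemma independentD: "(\<lambda>x. \<Sum>s\<in>S. co s * delta s x) \<in> ext_ideal I \<Longrightarrow> s \<in> S \<Longrightarrow> co s \<in> maxideal"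
  using independent by (simp add: residue_independent_def)

lemma coord_expansion: "(\<lambda>c. x c - (\<Sum>s\<in>S. coord Lam s x * delta s c)) \<in> ext_ideal I"
proof (rule mem_fun_cong[OF submodule_sum[OF ext_ideal_is_submodule spanning, where r = x]])
  fix c
  have "(\<Sum>a\<in>UNIV. x a * (\<Sum>s\<in>S. Lam a s * delta s c)) = (\<Sum>s\<in>S. coord Lam s x * delta s c)"
    unfolding coord_def sum_distrib_left sum_distrib_right
    by (subst sum.swap) (simp add: mult_ac)
  then show "x c - (\<Sum>s\<in>S. coord Lam s x * delta s c)
      = (\<Sum>a\<in>UNIV. x a * (delta a c - (\<Sum>s\<in>S. Lam a s * delta s c)))"
    by (simp add: right_diff_distrib sum_subtractf sum_delta_right)
qed

lemma coord_ext_ideal: "x \<in> ext_ideal I \<Longrightarrow> s \<in> S \<Longrightarrow> coord Lam s x \<in> maxideal"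
proof -
  assume "x \<in> ext_ideal I" and s: "s \<in> S"
  from submodule_diff[OF ext_ideal_is_submodule this(1) coord_expansion[of x]]
  have "(\<lambda>c. \<Sum>s\<in>S. coord Lam s x * delta s c) \<in> ext_ideal I"
    by simp
  from independentD[OF this s] show ?thesis .
qed

lemma basis_element_coord: "u \<in> S \<Longrightarrow> s \<in> S \<Longrightarrow> Lam u s - delta u s \<in> maxideal"
proof -
  assume u: "u \<in> S" and s: "s \<in> S"
  have "(\<lambda>c. \<Sum>s\<in>S. (delta u s - Lam u s) * delta s c) \<in> ext_ideal I"
  proof (rule mem_fun_cong[OF spanning[of u]])
    fix c
    show "(\<Sum>s\<in>S. (delta u s - Lam u s) * delta s c) = delta u c - (\<Sum>s\<in>S. Lam u s * delta s c)"
      using u by (simp add: left_diff_distrib sum_subtractf sum_delta_left)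
  qed
  from maxideal_uminus[OF independentD[OF this s]] show ?thesis
    by simp
qed

lemma tensor_coord_ext_ideal_tensor:
  assumes F: "F \<in> ext_ideal (tensor_ideal I)" and s: "s \<in> S" and t: "t \<in> S"
  shows "tensor_coord Lam s t F \<in> maxideal"
proof -
  have "tensor_coord Lam s t T \<in> maxideal" if "T \<in> tensor_ideal I" for T
    using that
  proof (induction T rule: tensor_ideal.induct)
    case zero
    then show ?case
      by (simp add: tensor_coord_def maxideal_zero[OF local])
  next
    case (left x T y)
    then show ?case
      using coord_ext_ideal[OF ext_ideal_if_mem[OF local hopf_ideal_submodule[OF hopf]] s]
      by (simp add: tensor_coord_add tensor_coord_gtensor maxideal_add[OF local]
          maxideal_mult_right)
  next
    case (right y T x)
    then show ?case
      using coord_ext_ideal[OF ext_ideal_if_mem[OF local hopf_ideal_submodule[OF hopf]] t]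
      by (simp add: tensor_coord_add tensor_coord_gtensor maxideal_add[OF local] maxideal_mult_left)
  qed
  moreover have "tensor_coord Lam s t U \<in> maxideal" if "U \<in> maxideal_fun" for U
    using that unfolding tensor_coord_def maxideal_fun_def
    by (auto intro!: maxideal_sum[OF local] simp: maxideal_mult_right mult.assoc)
  ultimately show ?thesis
    using F unfolding ext_ideal_iff by (auto simp: tensor_coord_add maxideal_add[OF local])
qed

lemma tensor_coord_comult_congr:
  assumes s: "s \<in> S" and t: "t \<in> S"
  shows "tensor_coord Lam s t (comult x) - (if s = t then coord Lam s x else 0) \<in> maxideal"
proof -
  let ?c = "\<lambda>u. coord Lam u x"
  let ?D = "\<lambda>y. \<Sum>a\<in>UNIV. y a * Lam a s * Lam a t"
  define x' where "x' = (\<lambda>c. x c - (\<Sum>u\<in>S. ?c u * delta u c))"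
  have Dx': "?D x' \<in> maxideal"
    using tensor_coord_ext_ideal_tensor[OF comult_ext_ideal[OF local hopf coord_expansion] s t]
    by (simp add: x'_def tensor_coord_comult)
  have "(\<Sum>a\<in>UNIV. (\<Sum>u\<in>S. ?c u * delta u a) * Lam a s * Lam a t)
      = (\<Sum>u\<in>S. \<Sum>a\<in>UNIV. delta u a * (?c u * (Lam a s * Lam a t)))"
    unfolding sum_distrib_right by (subst sum.swap) (simp add: mult_ac)
  also have "\<dots> = (\<Sum>u\<in>S. ?c u * (Lam u s * Lam u t))"
    by (simp add: sum_delta_left)
  finally have D_expand: "?D x' = ?D x - (\<Sum>u\<in>S. ?c u * (Lam u s * Lam u t))"
    by (simp add: x'_def left_diff_distrib sum_subtractf)
  have approx: "(\<Sum>u\<in>S. ?c u * (Lam u s * Lam u t - delta u s * delta u t)) \<in> maxideal"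
  proof (intro maxideal_sum[OF local] maxideal_mult_left)
    fix u assume u: "u \<in> S"
    have "Lam u s * Lam u t - delta u s * delta u t
        = Lam u s * (Lam u t - delta u t) + (Lam u s - delta u s) * delta u t"
      by (simp add: algebra_simps)
    with basis_element_coord[OF u s] basis_element_coord[OF u t]
    show "Lam u s * Lam u t - delta u s * delta u t \<in> maxideal"
      by (simp add: maxideal_add[OF local] maxideal_mult_left maxideal_mult_right)
  qed
  have "(\<Sum>u\<in>S. ?c u * (delta u s * delta u t)) = (\<Sum>u\<in>S. delta s u * (?c u * delta s t))"
    by (intro sum.cong) (auto simp: delta_def)
  also have "\<dots> = ?c s * delta s t"
    using s by (simp add: sum_delta_left)
  also have "\<dots> = (if s = t then ?c s else 0)"
    by (simp add: delta_def)
  finally have "?D x - (if s = t then ?c s else 0)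
      = ?D x' + (\<Sum>u\<in>S. ?c u * (Lam u s * Lam u t - delta u s * delta u t))"
    unfolding D_expand by (simp add: right_diff_distrib sum_subtractf)
  with maxideal_add[OF local Dx' approx] have "?D x - (if s = t then ?c s else 0) \<in> maxideal"
    by simp
  then show ?thesis
    by (simp add: tensor_coord_comult)
qed

lemma grouplike_mod_coord_idempotent:
  assumes f: "grouplike_mod I f" and s: "s \<in> S" and t: "t \<in> S"
  shows "coord Lam s f * coord Lam t f - (if s = t then coord Lam s f else 0) \<in> maxideal"
proof -
  have "tensor_coord Lam s t (\<lambda>p. comult f p - gtensor f f p) \<in> maxideal"
    using f s t by (simp add: grouplike_mod_def tensor_coord_ext_ideal_tensor)
  then have "tensor_coord Lam s t (comult f) - coord Lam s f * coord Lam t f \<in> maxideal"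
    by (simp add: tensor_coord_diff tensor_coord_gtensor)
  from maxideal_diff[OF local tensor_coord_comult_congr[OF s t, of f] this] show ?thesis
    by (simp add: algebra_simps)
qed

lemma grouplike_mod_coord_sum:
  assumes f: "grouplike_mod I f"
  shows "(\<Sum>s\<in>S. coord Lam s f) - 1 \<in> maxideal"
proof -
  have "(\<Sum>c\<in>UNIV. \<Sum>s\<in>S. coord Lam s f * delta s c) = (\<Sum>s\<in>S. \<Sum>c\<in>UNIV. delta s c * coord Lam s f)"
    by (subst sum.swap) (simp add: mult.commute)
  also have "\<dots> = (\<Sum>s\<in>S. coord Lam s f)"
    by (simp add: sum_delta_left)
  finally have "counit (\<lambda>c. f c - (\<Sum>s\<in>S. coord Lam s f * delta s c))
      = counit f - (\<Sum>s\<in>S. coord Lam s f)"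
    by (simp add: counit_def sum_subtractf)
  with counit_ext_ideal[OF local hopf coord_expansion[of f]]
  have "counit f - (\<Sum>s\<in>S. coord Lam s f) \<in> maxideal"
    by simp
  from maxideal_diff[OF local _ this, of "counit f - 1"] f show ?thesis
    by (simp add: grouplike_mod_def)
qed

lemma grouplike_mod_congr_basis_element:
  assumes f: "grouplike_mod I f"
  obtains s where "s \<in> S" and "(\<lambda>a. f a - delta s a) \<in> ext_ideal I"
proof -
  obtain s0 where "s0 \<in> S"
    and s0: "\<And>s. s \<in> S \<Longrightarrow> coord Lam s f - (if s = s0 then 1 else 0) \<in> maxideal"
    using orthogonal_idempotents_mod_maxideal[OF local grouplike_mod_coord_idempotent[OF f]
        grouplike_mod_coord_sum[OF f]] by blast
  have "(\<lambda>c. \<Sum>s\<in>S. (coord Lam s f - delta s0 s) * delta s c) \<in> maxideal_fun"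
    using s0 by (auto simp: maxideal_fun_def delta_def eq_commute
        intro!: maxideal_sum[OF local] maxideal_mult_right)
  from submodule_add[OF ext_ideal_is_submodule coord_expansion[of f]
      ext_ideal_if_maxideal_fun[OF local hopf_ideal_submodule[OF hopf] this]]
  have "(\<lambda>a. f a - delta s0 a) \<in> ext_ideal I"
    using \<open>s0 \<in> S\<close> by (simp add: left_diff_distrib sum_subtractf sum_delta_left)
  with \<open>s0 \<in> S\<close> show ?thesis by (rule that)
qed

end

lemma reduce_cls:
  assumes local: "is_local TYPE('r)" and I: "is_submodule (I :: ('a \<Rightarrow> 'r::comm_ring_1) set)"
  shows "reduce I (cls I f) = cls (ext_ideal I) f"
proof (intro set_eqI iffI)
  fix g assume "g \<in> reduce I (cls I f)"
  then obtain h where "(\<lambda>a. h a - f a) \<in> I" and "(\<lambda>a. g a - h a) \<in> ext_ideal I"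
    unfolding reduce_def cls_def by blast
  from submodule_add[OF ext_ideal_submodule[OF local I] this(2)
      ext_ideal_if_mem[OF local I this(1)]]
  show "g \<in> cls (ext_ideal I) f"
    unfolding cls_def by simp
next
  fix g assume "g \<in> cls (ext_ideal I) f"
  moreover have "f \<in> cls I f"
    unfolding cls_def using submodule_zero[OF I] by simp
  ultimately show "g \<in> reduce I (cls I f)"
    unfolding reduce_def cls_def by blast
qed

context
  fixes I :: "('a::{finite, ab_group_add} \<Rightarrow> 'r::comm_ring_1) set"
  assumes local: "is_local TYPE('r)" and hopf: "hopf_ideal I"
begin

lemma grouplike_mod_congr_delta:
  assumes "grouplike_mod I f"
  obtains c where "(\<lambda>a. f a - delta c a) \<in> ext_ideal I"
proof -
  obtain S Lam where "residue_basis I S Lam"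
    using residue_basis_exists[OF local hopf] by blast
  from residue_basis.grouplike_mod_congr_basis_element[OF this assms] that show ?thesis
    by blast
qed

lemma grouplikes_Hk_eq_delta: "grouplikes_Hk I = range (\<lambda>c. cls (ext_ideal I) (delta c))"
proof (intro set_eqI iffI)
  fix C assume "C \<in> grouplikes_Hk I"
  then obtain f where C: "C = cls (ext_ideal I) f" and f: "grouplike_mod I f"
    unfolding grouplikes_Hk_eq by blast
  obtain c where "(\<lambda>a. f a - delta c a) \<in> ext_ideal I"
    using grouplike_mod_congr_delta[OF f] .
  with C show "C \<in> range (\<lambda>c. cls (ext_ideal I) (delta c))"
    using cls_eq_iff[OF ext_ideal_submodule[OF local hopf_ideal_submodule[OF hopf]]] by blast
next
  fix C assume "C \<in> range (\<lambda>c. cls (ext_ideal I) (delta c))"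
  then show "C \<in> grouplikes_Hk I"
    unfolding grouplikes_Hk_eq using grouplike_mod_if_grouplike[OF local grouplike_delta] by blast
qed

lemma grouplikes_H_eq_delta:
  assumes N: "of_nat (card (UNIV :: 'a set)) dvd (1::'r)"
  shows "grouplikes_H I = range (\<lambda>c. cls I (delta c))"
proof (intro set_eqI iffI)
  fix C assume "C \<in> grouplikes_H I"
  then obtain f where C: "C = cls I f" and f: "grouplike I f"
    unfolding grouplikes_H_eq by blast
  obtain c where "(\<lambda>a. f a - delta c a) \<in> ext_ideal I"
    using grouplike_mod_congr_delta[OF grouplike_mod_if_grouplike[OF local f]] .
  with grouplike_lift_delta[OF local hopf N f] have "(\<lambda>a. f a - delta c a) \<in> I" .
  with C show "C \<in> range (\<lambda>c. cls I (delta c))"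
    using cls_eq_iff[OF hopf_ideal_submodule[OF hopf]] by blast
next
  fix C assume "C \<in> range (\<lambda>c. cls I (delta c))"
  then show "C \<in> grouplikes_H I"
    unfolding grouplikes_H_eq using grouplike_delta by blast
qed

end

theorem proposition3p7:
  fixes I :: "('a::{finite, ab_group_add} \<Rightarrow> 'r::comm_ring_1) set"
  assumes "is_local TYPE('r)"
    and "hopf_ideal I"
    and "of_nat (card (UNIV :: 'a set)) dvd (1::'r)"
  shows "bij_betw (reduce I) (grouplikes_H I) (grouplikes_Hk I)"
proof -
  note local = assms(1) and hopf = assms(2) and N = assms(3)
  note I = hopf_ideal_submodule[OF hopf]
  have reduce_delta: "reduce I (cls I (delta c)) = cls (ext_ideal I) (delta c)" for c
    by (rule reduce_cls[OF local I])
  have "inj_on (reduce I) (range (\<lambda>c. cls I (delta c)))"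
  proof (rule inj_onI, clarify)
    fix c d assume "reduce I (cls I (delta c)) = reduce I (cls I (delta d))"
    then have "(\<lambda>a. delta c a - delta d a) \<in> ext_ideal I"
      unfolding reduce_delta cls_eq_iff[OF ext_ideal_submodule[OF local I]] .
    with grouplike_lift_delta[OF local hopf N grouplike_delta]
    show "cls I (delta c) = cls I (delta d)"
      unfolding cls_eq_iff[OF I] .
  qed
  then show ?thesis
    unfolding bij_betw_def grouplikes_H_eq_delta[OF local hopf N]
      grouplikes_Hk_eq_delta[OF local hopf]
    by (simp add: image_image reduce_delta)
qed

end
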